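(* Let $\mathcal X$ be a Banach space and $0<T\le1$. Let $J:\{(v,u):0\le u\le v\le T\}\to\mathcal X$ be continuous with $J_{u,u}=0$, and for $u\le m\le v$ set $\delta J_{v,m,u}=J_{v,u}-J_{v,m}-J_{m,u}$. Fix $0\le s\le t\le T$ and suppose that the limit $$\mathscr J_{t,s}=\lim_{n\to\infty}\sum_{[u,v]\in\pi_n(s,t)}J_{v,u}$$ exists in $\mathcal X$, where $\pi_n(s,t)$ is the $n$-th dyadic partition of $[s,t]$ into $2^n$ intervals of length $2^{-n}(t-s)$. Let $l\in\mathbb N$. For $i=1,\dots,l$, let $\mu_i>1$, $0\le\lambda_i<\mu_i$, $\nu_i\in[0,\mu_i]$, $\varepsilon_i\in[0,1)$ and $A_i\ge0$ be such that $$|\delta J_{v,m,u}|_{\mathcal X}\le\sum_{i=1}^lA_i|t-u|^{-\lambda_i}|u-m|^{\nu_i}|m-v|^{\mu_i-\nu_i}m^{-\varepsilon_i}$$ for all $s\le u\le m\le v\le t$ with $m>0$. Let $\omega\in[0,\max_i\varepsilon_i]$ be such that $(\varepsilon_i-\omega)_+<\mu_i-\lambda_i$ for each $i=1,\dots,l$. Then $$s^\omega|\mathscr J_{t,s}-J_{t,s}|_{\mathcal X}\lesssim\sum_{i=1}^lA_i|t-s|^{\mu_i-\lambda_i-(\varepsilon_i-\omega)_+},$$ with an implied constant depending only on the exponents $\mu_i,\lambda_i,\nu_i,\varepsilon_i,\omega$.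
   Context: Here $x_+=\max(x,0)$. The $n$-th dyadic partition is $$\pi_n(s,t)=\{s\le s+2^{-n}(t-s)\le\dots\le t-2^{-n}(t-s)\le t\},$$ and $[u,v]\in\pi_n(s,t)$ ranges over its consecutive intervals. *)

theory Defs
  imports "HOL-Analysis.Analysis"
begin

text \<open>Real power with the paper's convention 0^0 = 1 (and 0^a = 0 for a \<noteq> 0).\<close>
definition pw :: "real \<Rightarrow> real \<Rightarrow> real" where
  "pw x a = (if x = 0 then (if a = 0 then 1 else 0) else x powr a)"

definition pos_part :: "real \<Rightarrow> real" where
  "pos_part x = max x 0"

text \<open>Increment \<delta>J_{v,m,u} = J_{v,u} - J_{v,m} - J_{m,u}; J v u stands for J_{v,u}.\<close>
definition deltaJ :: "(real \<Rightarrow> real \<Rightarrow> 'a::real_normed_vector) \<Rightarrow> real \<Rightarrow> real \<Rightarrow> real \<Rightarrow> 'a" where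
  "deltaJ J v m u = J v u - J v m - J m u"

definition dyadic_sum :: "(real \<Rightarrow> real \<Rightarrow> 'a::real_normed_vector) \<Rightarrow> real \<Rightarrow> real \<Rightarrow> nat \<Rightarrow> 'a" where
  "dyadic_sum J s t n =
     (\<Sum>k<(2::nat)^n. J (s + real (Suc k) * (t - s) / 2^n) (s + real k * (t - s) / 2^n))"

end

theory Submission
  imports Defs
begin

(* The difference between J_{t,s} and the n-th dyadic sum telescopes over the levels p < n:
   refining level p splits each [u,v] at its midpoint m and changes the sum by -deltaJ_{v,m,u}.
   With h = (t-s)/2^p and a = (eps-om)_+, the weight s^om is absorbed into the singularity at 0
   through s^om m^(-eps) <= m^(-a) (as s <= m <= 1), so level p contributes at most
   h^(mu-lam-a) sum_k (2^p-k)^(-lam) (k+1)^(-a) <~ h^(mu-lam-a) 2^(p(1-c)) for any c < 1 with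
   c <= lam + a. Because mu > 1, such a c can be taken above 1 - (mu-lam-a); the level bounds then
   decay geometrically in p and add up to a multiple of (t-s)^(mu-lam-a), uniformly in n.
   Only mu > 1, lam >= 0, om >= 0 and (eps-om)_+ < mu - lam are used. *)

lemma pw_pos [simp]: "0 < x \<Longrightarrow> pw x a = x powr a"
  by (simp add: pw_def)

lemma pw_nonneg: "0 \<le> pw x a"
  by (simp add: pw_def)

lemma pw_le_powr:
  assumes "0 \<le> s" "s \<le> m" "0 < m" "0 \<le> a"
  shows "pw s a \<le> m powr a"
  using assms by (auto simp: pw_def intro: powr_mono2)

lemma pw_mult_powr_neg_le:
  assumes "0 \<le> s" "s \<le> m" "0 < m" "m \<le> 1" "0 \<le> om"
  shows "pw s om * m powr (- eps) \<le> m powr (- pos_part (eps - om))"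
proof -
  have "pw s om * m powr (- eps) \<le> m powr om * m powr (- eps)"
    using assms by (intro mult_right_mono pw_le_powr) auto
  also have "\<dots> = m powr (om - eps)"
    by (simp add: powr_add[symmetric])
  also have "\<dots> \<le> m powr (- pos_part (eps - om))"
    using assms by (intro powr_mono') (auto simp: pos_part_def)
  finally show ?thesis .
qed

lemma powr_increment_ge:
  fixes x c :: real
  assumes "0 \<le> c" "c < 1" "0 \<le> x"
  shows "(1 - c) * (x + 1) powr (- c) \<le> (x + 1) powr (1 - c) - x powr (1 - c)"
proof (cases "x = 0")
  case False
  then have "0 < x" using assms(3) by simp
  have young: "x powr (1 - c) * (x + 1) powr c \<le> (1 - c) * x + c * (x + 1)"
    using Youngs_inequality_0[of "1 - c" c x "x + 1"] assms \<open>0 < x\<close> by simp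
  have "x powr (1 - c) = (x powr (1 - c) * (x + 1) powr c) * (x + 1) powr (- c)"
    using \<open>0 < x\<close> by (simp add: powr_minus)
  also have "\<dots> \<le> ((1 - c) * x + c * (x + 1)) * (x + 1) powr (- c)"
    by (rule mult_right_mono[OF young]) simp
  also have "\<dots> = (x + 1) powr (1 - c) - (1 - c) * (x + 1) powr (- c)"
    using \<open>0 < x\<close> by (simp add: powr_diff powr_minus field_simps)
  finally show ?thesis by simp
qed (use assms in simp)

lemma sum_powr_neg_le:
  fixes c :: real
  assumes "0 \<le> c" "c < 1"
  shows "(\<Sum>k<N. (real k + 1) powr (- c)) \<le> real N powr (1 - c) / (1 - c)"
proof (induction N)
  case (Suc N)
  have "(1 - c) * (real N + 1) powr (- c) \<le> (real N + 1) powr (1 - c) - real N powr (1 - c)"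
    using powr_increment_ge[OF assms] by simp
  with Suc assms show ?case
    by (simp add: field_simps add.commute)
qed simp

lemma powr_neg_mult_le_add:
  fixes x y lam a c :: real
  assumes "1 \<le> x" "1 \<le> y" "0 \<le> lam" "0 \<le> a" "c \<le> lam + a"
  shows "x powr (- lam) * y powr (- a) \<le> x powr (- c) + y powr (- c)"
proof -
  define z where "z = min x y"
  have "1 \<le> z" "z \<le> x" "z \<le> y" using assms by (auto simp: z_def)
  then have "x powr (- lam) * y powr (- a) \<le> z powr (- lam) * z powr (- a)"
    using assms by (intro mult_mono powr_mono2') auto
  also have "\<dots> = z powr (- (lam + a))"
    by (simp add: powr_add[symmetric])
  also have "\<dots> \<le> z powr (- c)"
    using assms \<open>1 \<le> z\<close> by (intro powr_mono) auto
  also have "\<dots> \<le> x powr (- c) + y powr (- c)"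
    by (simp add: z_def min_def)
  finally show ?thesis .
qed

lemma sum_reflected_powr_neg_le:
  fixes lam a c :: real
  assumes "0 \<le> lam" "0 \<le> a" "0 \<le> c" "c < 1" "c \<le> lam + a"
  shows "(\<Sum>k<N. (real N - real k) powr (- lam) * (real k + 1) powr (- a))
           \<le> 2 * real N powr (1 - c) / (1 - c)"
proof -
  have "(\<Sum>k<N. (real N - real k) powr (- lam) * (real k + 1) powr (- a))
      \<le> (\<Sum>k<N. (real N - real k) powr (- c) + (real k + 1) powr (- c))"
    using assms by (intro sum_mono powr_neg_mult_le_add) auto
  also have "(\<Sum>k<N. (real N - real k) powr (- c)) = (\<Sum>k<N. (real k + 1) powr (- c))"
    by (rule sum.reindex_bij_witness[where i="\<lambda>k. N - Suc k" and j="\<lambda>k. N - Suc k"])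
       (auto simp: of_nat_diff)
  then have "(\<Sum>k<N. (real N - real k) powr (- c) + (real k + 1) powr (- c))
      = 2 * (\<Sum>k<N. (real k + 1) powr (- c))"
    by (simp add: sum.distrib)
  also have "\<dots> \<le> 2 * real N powr (1 - c) / (1 - c)"
    using sum_powr_neg_le[OF assms(3,4), of N] by simp
  finally show ?thesis .
qed

lemma powr_two_power: "((2::real) ^ p) powr x = (2 powr x) ^ p"
  by (simp add: powr_realpow[symmetric] powr_powr mult.commute)

lemma sum_mult_le_sum_mult_sum:
  fixes a b :: "'i \<Rightarrow> real"
  assumes "finite I" "\<And>i. i \<in> I \<Longrightarrow> 0 \<le> a i" "\<And>i. i \<in> I \<Longrightarrow> 0 \<le> b i"
  shows "(\<Sum>i\<in>I. a i * b i) \<le> (\<Sum>i\<in>I. a i) * (\<Sum>i\<in>I. b i)"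
  unfolding sum_distrib_right
  using assms by (intro sum_mono mult_left_mono member_le_sum) auto

lemma sum_lessThan_double:
  "(\<Sum>j<2 * n. f j) = (\<Sum>k<n. f (2 * k) + f (2 * k + 1))" for n :: nat
  by (induction n) (auto simp: ac_simps)

definition dyadic_point :: "real \<Rightarrow> real \<Rightarrow> nat \<Rightarrow> nat \<Rightarrow> real" where
  "dyadic_point s t p k = s + real k * (t - s) / 2 ^ p"

lemma dyadic_sum_eq:
  "dyadic_sum J s t n = (\<Sum>k<2 ^ n. J (dyadic_point s t n (Suc k)) (dyadic_point s t n k))"
  by (simp add: dyadic_sum_def dyadic_point_def)

lemma dyadic_point_Suc_double: "dyadic_point s t (Suc p) (2 * k) = dyadic_point s t p k"
  by (simp add: dyadic_point_def field_simps)

lemma dyadic_points_ordered: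
  assumes "s < t" "k < 2 ^ p"
  shows "s \<le> dyadic_point s t p k"
    and "dyadic_point s t p k < dyadic_point s t (Suc p) (2 * k + 1)"
    and "dyadic_point s t (Suc p) (2 * k + 1) < dyadic_point s t p (Suc k)"
    and "dyadic_point s t p (Suc k) \<le> t"
proof -
  have "real (Suc k) \<le> 2 ^ p"
    using assms(2) by (metis Suc_leI of_nat_le_iff of_nat_numeral of_nat_power)
  then have "real (Suc k) * (t - s) \<le> 2 ^ p * (t - s)"
    using assms(1) by (intro mult_right_mono) auto
  then have "real (Suc k) * (t - s) / 2 ^ p \<le> t - s"
    by (simp add: field_simps)
  then show "dyadic_point s t p (Suc k) \<le> t"
    by (simp add: dyadic_point_def)
qed (use assms in \<open>auto simp: dyadic_point_def field_simps intro: mult_right_mono\<close>)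

lemma dyadic_sum_diff_Suc:
  "dyadic_sum J s t p - dyadic_sum J s t (Suc p) =
     (\<Sum>k<2 ^ p. deltaJ J (dyadic_point s t p (Suc k)) (dyadic_point s t (Suc p) (2 * k + 1))
                          (dyadic_point s t p k))"
proof -
  have "dyadic_point s t (Suc p) (Suc (2 * k + 1)) = dyadic_point s t p (Suc k)" for k
    using dyadic_point_Suc_double[of s t p "Suc k"] by simp
  then have "dyadic_sum J s t (Suc p) =
      (\<Sum>k<2 ^ p. J (dyadic_point s t (Suc p) (2 * k + 1)) (dyadic_point s t p k)
                 + J (dyadic_point s t p (Suc k)) (dyadic_point s t (Suc p) (2 * k + 1)))"
    unfolding dyadic_sum_eq power_Suc sum_lessThan_double by (simp add: dyadic_point_Suc_double)
  then show ?thesis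
    by (simp add: dyadic_sum_eq deltaJ_def sum_subtractf[symmetric] diff_diff_eq add.commute)
qed

lemma norm_dyadic_sum_diff_le:
  "norm (dyadic_sum J s t n - J t s) \<le>
     (\<Sum>p<n. \<Sum>k<2 ^ p. norm (deltaJ J (dyadic_point s t p (Suc k))
                                     (dyadic_point s t (Suc p) (2 * k + 1)) (dyadic_point s t p k)))"
proof -
  have "J t s - dyadic_sum J s t n = (\<Sum>p<n. dyadic_sum J s t p - dyadic_sum J s t (Suc p))"
    using sum_lessThan_telescope'[of "dyadic_sum J s t" n] by (simp add: dyadic_sum_def)
  then have "norm (dyadic_sum J s t n - J t s) =
      norm (\<Sum>p<n. \<Sum>k<2 ^ p. deltaJ J (dyadic_point s t p (Suc k))
                      (dyadic_point s t (Suc p) (2 * k + 1)) (dyadic_point s t p k))"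
    by (simp add: norm_minus_commute dyadic_sum_diff_Suc)
  also have "\<dots> \<le> (\<Sum>p<n. norm (\<Sum>k<2 ^ p. deltaJ J (dyadic_point s t p (Suc k))
                      (dyadic_point s t (Suc p) (2 * k + 1)) (dyadic_point s t p k)))"
    by (rule norm_sum)
  also have "\<dots> \<le> (\<Sum>p<n. \<Sum>k<2 ^ p. norm (deltaJ J (dyadic_point s t p (Suc k))
                      (dyadic_point s t (Suc p) (2 * k + 1)) (dyadic_point s t p k)))"
    by (intro sum_mono norm_sum)
  finally show ?thesis .
qed

definition delta_weight :: "real \<Rightarrow> real \<Rightarrow> real \<Rightarrow> real \<Rightarrow> real \<Rightarrow> real \<Rightarrow> real \<Rightarrow> real \<Rightarrow> real" where
  "delta_weight lam nu mu eps t v m u =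
     pw \<bar>t - u\<bar> (- lam) * pw \<bar>u - m\<bar> nu * pw \<bar>m - v\<bar> (mu - nu) * pw m (- eps)"

lemma delta_weight_midpoint_le:
  fixes s h N lam nu mu eps om :: real and k :: nat
  assumes "0 \<le> s" "0 < h" "real k + 1 \<le> N" "s + N * h \<le> 1" "0 \<le> lam" "0 \<le> om"
  defines "u \<equiv> s + real k * h" and "a \<equiv> pos_part (eps - om)"
  shows "pw s om * delta_weight lam nu mu eps (s + N * h) (u + h) (u + h / 2) u
           \<le> 2 powr (a - mu) * h powr (mu - lam - a)
               * ((N - real k) powr (- lam) * (real k + 1) powr (- a))"
proof -
  have "0 < N - real k" using assms(3) by simp
  then have t_factor: "pw \<bar>s + N * h - u\<bar> (- lam) = (N - real k) powr (- lam) * h powr (- lam)"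
    using \<open>0 < h\<close> by (simp add: u_def left_diff_distrib[symmetric] powr_mult)
  have half_factors: "pw \<bar>u - (u + h / 2)\<bar> nu * pw \<bar>u + h / 2 - (u + h)\<bar> (mu - nu) = 2 powr (- mu) * h powr mu"
    using \<open>0 < h\<close> by (simp add: powr_add[symmetric] powr_divide powr_minus_divide)
  have "0 \<le> real k * h" using assms(2) by simp
  then have "s \<le> u + h / 2" "0 < u + h / 2"
    using assms(1,2) unfolding u_def by linarith+
  moreover have "(real k + 1) * h / 2 \<le> u + h / 2"
    using assms(1,2) by (simp add: u_def field_simps)
  moreover have "(real k + 1 / 2) * h \<le> N * h"
    using assms(2,3) by (intro mult_right_mono) auto
  then have "u + h / 2 \<le> 1"
    using assms(4) by (simp add: u_def algebra_simps)
  ultimately have "pw s om * pw (u + h / 2) (- eps) \<le> (u + h / 2) powr (- a)"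
    using pw_mult_powr_neg_le[of s "u + h / 2" om eps] assms(1,6) by (simp add: a_def)
  also have "\<dots> \<le> ((real k + 1) * h / 2) powr (- a)"
    using \<open>(real k + 1) * h / 2 \<le> u + h / 2\<close> assms(2)
    by (intro powr_mono2') (auto simp: a_def pos_part_def)
  also have "\<dots> = 2 powr a * (real k + 1) powr (- a) * h powr (- a)"
    using \<open>0 < h\<close> by (simp add: powr_mult powr_divide powr_minus_divide)
  finally have m_factor: "pw s om * pw (u + h / 2) (- eps) \<le> 2 powr a * (real k + 1) powr (- a) * h powr (- a)" .
  have "pw s om * delta_weight lam nu mu eps (s + N * h) (u + h) (u + h / 2) u
      = pw \<bar>s + N * h - u\<bar> (- lam) * (pw \<bar>u - (u + h / 2)\<bar> nu * pw \<bar>u + h / 2 - (u + h)\<bar> (mu - nu))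
          * (pw s om * pw (u + h / 2) (- eps))"
    by (simp add: delta_weight_def ac_simps)
  also have "\<dots> \<le> (N - real k) powr (- lam) * h powr (- lam) * (2 powr (- mu) * h powr mu)
                   * (2 powr a * (real k + 1) powr (- a) * h powr (- a))"
    unfolding t_factor half_factors by (intro mult_left_mono m_factor) auto
  also have "\<dots> = (2 powr (- mu) * 2 powr a) * (h powr (- lam) * h powr mu * h powr (- a))
                   * ((N - real k) powr (- lam) * (real k + 1) powr (- a))"
    by (simp add: ac_simps)
  also have "\<dots> = 2 powr (a - mu) * h powr (mu - lam - a)
                   * ((N - real k) powr (- lam) * (real k + 1) powr (- a))"
    by (simp add: powr_add[symmetric])
  finally show ?thesis .
qed

lemma dyadic_delta_weight_le:
  fixes s t lam nu mu eps om :: real and p k :: nat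
  assumes "0 \<le> s" "s < t" "t \<le> 1" "k < 2 ^ p" "0 \<le> lam" "0 \<le> om"
  defines "a \<equiv> pos_part (eps - om)" and "h \<equiv> (t - s) / 2 ^ p"
  shows "pw s om * delta_weight lam nu mu eps t (dyadic_point s t p (Suc k))
                     (dyadic_point s t (Suc p) (2 * k + 1)) (dyadic_point s t p k)
         \<le> 2 powr (a - mu) * h powr (mu - lam - a)
             * ((2 ^ p - real k) powr (- lam) * (real k + 1) powr (- a))"
proof -
  have "real (Suc k) \<le> 2 ^ p"
    using assms(4) by (metis Suc_leI of_nat_le_iff of_nat_numeral of_nat_power)
  moreover have "0 < h" using assms(2) by (simp add: h_def)
  ultimately have "pw s om * delta_weight lam nu mu eps (s + 2 ^ p * h) (s + real k * h + h)
                     (s + real k * h + h / 2) (s + real k * h)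
         \<le> 2 powr (a - mu) * h powr (mu - lam - a)
             * ((2 ^ p - real k) powr (- lam) * (real k + 1) powr (- a))"
    using assms(1,3,5,6) unfolding a_def
    by (intro delta_weight_midpoint_le) (auto simp: h_def)
  moreover have "s + 2 ^ p * h = t" "s + real k * h = dyadic_point s t p k"
    "s + real k * h + h = dyadic_point s t p (Suc k)"
    "s + real k * h + h / 2 = dyadic_point s t (Suc p) (2 * k + 1)"
    by (simp_all add: h_def dyadic_point_def field_simps)
  ultimately show ?thesis by simp
qed

definition dyadic_level_weight :: "real \<Rightarrow> real \<Rightarrow> real \<Rightarrow> real \<Rightarrow> real \<Rightarrow> real \<Rightarrow> nat \<Rightarrow> real" where
  "dyadic_level_weight lam nu mu eps s t p =
     (\<Sum>k<2 ^ p. delta_weight lam nu mu eps t (dyadic_point s t p (Suc k))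
                   (dyadic_point s t (Suc p) (2 * k + 1)) (dyadic_point s t p k))"

lemma dyadic_level_weight_le:
  fixes s t lam nu mu eps om c :: real
  assumes "0 \<le> s" "s < t" "t \<le> 1" "0 \<le> lam" "0 \<le> om"
    and "0 \<le> c" "c < 1" "c \<le> lam + pos_part (eps - om)"
  defines "a \<equiv> pos_part (eps - om)" and "e \<equiv> mu - lam - pos_part (eps - om)"
  shows "pw s om * dyadic_level_weight lam nu mu eps s t p
           \<le> 2 powr (a - mu + 1) / (1 - c) * (t - s) powr e * (2 powr (1 - c - e)) ^ p"
proof -
  define h where "h = (t - s) / 2 ^ p"
  have "0 \<le> a" by (simp add: a_def pos_part_def)
  have scale: "h powr e * (2 ^ p) powr (1 - c) = (t - s) powr e * (2 powr (1 - c - e)) ^ p"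
    using assms(2) by (simp add: h_def powr_divide powr_two_power power_mult_distrib[symmetric]
                                 powr_add[symmetric] divide_simps)
  have "pw s om * dyadic_level_weight lam nu mu eps s t p
      \<le> (\<Sum>k<2 ^ p. 2 powr (a - mu) * h powr e
                      * ((2 ^ p - real k) powr (- lam) * (real k + 1) powr (- a)))"
    unfolding dyadic_level_weight_def sum_distrib_left h_def a_def e_def
    by (intro sum_mono dyadic_delta_weight_le[OF assms(1-3) _ assms(4,5)]) simp
  also have "\<dots> = 2 powr (a - mu) * h powr e
                   * (\<Sum>k<2 ^ p. (real (2 ^ p) - real k) powr (- lam) * (real k + 1) powr (- a))"
    by (simp add: sum_distrib_left)
  also have "\<dots> \<le> 2 powr (a - mu) * h powr e * (2 * real (2 ^ p) powr (1 - c) / (1 - c))"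
    using assms \<open>0 \<le> a\<close> by (intro mult_left_mono sum_reflected_powr_neg_le) auto
  also have "\<dots> = 2 powr (a - mu + 1) / (1 - c) * (h powr e * (2 ^ p) powr (1 - c))"
    by (simp add: powr_add)
  finally show ?thesis
    unfolding scale by (simp add: ac_simps)
qed

lemma dyadic_weight_series_le:
  fixes lam nu mu eps om :: real
  assumes "1 < mu" "0 \<le> lam" "0 \<le> om" "pos_part (eps - om) < mu - lam"
  shows "\<exists>C\<ge>0. \<forall>s t n. 0 \<le> s \<and> s < t \<and> t \<le> 1 \<longrightarrow>
           pw s om * (\<Sum>p<n. dyadic_level_weight lam nu mu eps s t p)
             \<le> C * (t - s) powr (mu - lam - pos_part (eps - om))"
proof -
  define a where "a = pos_part (eps - om)"
  define e where "e = mu - lam - a"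
  define c where "c = min (lam + a) (max 0 (1 - e / 2))"
  define q where "q = (2::real) powr (1 - c - e)"
  define K where "K = 2 powr (a - mu + 1) / (1 - c)"
  have "0 \<le> a" by (simp add: a_def pos_part_def)
  have "0 < e" using assms by (simp add: e_def a_def)
  have c: "0 \<le> c" "c < 1" "c \<le> lam + a" "1 - c - e < 0"
    using assms \<open>0 \<le> a\<close> \<open>0 < e\<close> unfolding c_def e_def by (auto simp: min_def max_def field_simps)
  have "(2::real) powr (1 - c - e) < 2 powr 0"
    using c(4) by (intro powr_less_mono) auto
  then have q: "0 < q" "q < 1" by (auto simp: q_def)
  have geometric: "(\<Sum>p<n. q ^ p) \<le> 1 / (1 - q)" for n
    using q by (simp add: sum_gp_strict divide_right_mono)
  show ?thesis
  proof (intro exI[of _ "K / (1 - q)"] conjI allI impI)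
    show "0 \<le> K / (1 - q)" using c q by (simp add: K_def)
  next
    fix s t :: real and n :: nat
    assume st: "0 \<le> s \<and> s < t \<and> t \<le> 1"
    have "pw s om * (\<Sum>p<n. dyadic_level_weight lam nu mu eps s t p)
        \<le> (\<Sum>p<n. K * (t - s) powr e * q ^ p)"
      unfolding sum_distrib_left K_def q_def e_def a_def
      using st assms c by (intro sum_mono dyadic_level_weight_le) (auto simp: a_def)
    also have "\<dots> = K * (t - s) powr e * (\<Sum>p<n. q ^ p)"
      by (simp add: sum_distrib_left)
    also have "\<dots> \<le> K * (t - s) powr e * (1 / (1 - q))"
      using c by (intro mult_left_mono geometric) (simp add: K_def)
    finally show "pw s om * (\<Sum>p<n. dyadic_level_weight lam nu mu eps s t p)
        \<le> K / (1 - q) * (t - s) powr (mu - lam - pos_part (eps - om))"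
      by (simp add: e_def a_def)
  qed
qed

lemma norm_dyadic_sum_diff_le_weights:
  fixes J :: "real \<Rightarrow> real \<Rightarrow> 'a::real_normed_vector"
  assumes "0 \<le> s" "s < t"
    and bound: "\<And>u m v. s \<le> u \<Longrightarrow> u \<le> m \<Longrightarrow> m \<le> v \<Longrightarrow> v \<le> t \<Longrightarrow> 0 < m \<Longrightarrow>
          norm (deltaJ J v m u) \<le> (\<Sum>i\<in>I. A i * delta_weight (lam i) (nu i) (mu i) (eps i) t v m u)"
  shows "norm (dyadic_sum J s t n - J t s)
           \<le> (\<Sum>i\<in>I. A i * (\<Sum>p<n. dyadic_level_weight (lam i) (nu i) (mu i) (eps i) s t p))"
proof -
  have "0 < dyadic_point s t (Suc p) (2 * k + 1)" if "k < 2 ^ p" for p k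
    using dyadic_points_ordered[OF assms(2) that] assms(1) by linarith
  then have "norm (dyadic_sum J s t n - J t s)
      \<le> (\<Sum>p<n. \<Sum>k<2 ^ p. \<Sum>i\<in>I. A i * delta_weight (lam i) (nu i) (mu i) (eps i) t
            (dyadic_point s t p (Suc k)) (dyadic_point s t (Suc p) (2 * k + 1)) (dyadic_point s t p k))"
    using dyadic_points_ordered[OF assms(2)]
    by (intro order.trans[OF norm_dyadic_sum_diff_le] sum_mono bound) (auto intro: less_imp_le)
  also have "\<dots> = (\<Sum>i\<in>I. A i * (\<Sum>p<n. dyadic_level_weight (lam i) (nu i) (mu i) (eps i) s t p))"
    by (simp add: dyadic_level_weight_def sum_distrib_left sum.swap[of _ I])
  finally show ?thesis .
qed

lemma dyadic_limit_weighted_le: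
  fixes J :: "real \<Rightarrow> real \<Rightarrow> 'a::real_normed_vector"
  assumes "finite I" "0 \<le> s" "s \<le> t" "J t t = 0"
    and lim: "dyadic_sum J s t \<longlonglongrightarrow> JJ"
    and A: "\<And>i. i \<in> I \<Longrightarrow> 0 \<le> A i" and Cf: "\<And>i. i \<in> I \<Longrightarrow> 0 \<le> Cf i"
    and bound: "\<And>u m v. s \<le> u \<Longrightarrow> u \<le> m \<Longrightarrow> m \<le> v \<Longrightarrow> v \<le> t \<Longrightarrow> 0 < m \<Longrightarrow>
          norm (deltaJ J v m u) \<le> (\<Sum>i\<in>I. A i * delta_weight (lam i) (nu i) (mu i) (eps i) t v m u)"
    and series: "\<And>i n. i \<in> I \<Longrightarrow> s < t \<Longrightarrow>
          pw s om * (\<Sum>p<n. dyadic_level_weight (lam i) (nu i) (mu i) (eps i) s t p) \<le> Cf i * (t - s) powr e i"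
  shows "pw s om * norm (JJ - J t s) \<le> (\<Sum>i\<in>I. Cf i) * (\<Sum>i\<in>I. A i * pw \<bar>t - s\<bar> (e i))"
proof (cases "s = t")
  case True
  then have "dyadic_sum J s t = (\<lambda>n. 0)"
    using \<open>J t t = 0\<close> by (simp add: dyadic_sum_def fun_eq_iff)
  then have "JJ = 0"
    using LIMSEQ_unique[OF lim] by simp
  then show ?thesis
    using True \<open>J t t = 0\<close> A Cf by (simp add: sum_nonneg pw_nonneg)
next
  case False
  with \<open>s \<le> t\<close> have "s < t" by simp
  have "pw s om * norm (dyadic_sum J s t n - J t s)
          \<le> (\<Sum>i\<in>I. Cf i) * (\<Sum>i\<in>I. A i * pw \<bar>t - s\<bar> (e i))" for n
  proof -
    let ?S = "\<lambda>i. \<Sum>p<n. dyadic_level_weight (lam i) (nu i) (mu i) (eps i) s t p"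
    have "pw s om * norm (dyadic_sum J s t n - J t s) \<le> pw s om * (\<Sum>i\<in>I. A i * ?S i)"
      using norm_dyadic_sum_diff_le_weights[OF \<open>0 \<le> s\<close> \<open>s < t\<close> bound]
      by (intro mult_left_mono) (auto simp: pw_nonneg)
    also have "\<dots> = (\<Sum>i\<in>I. A i * (pw s om * ?S i))"
      by (simp add: sum_distrib_left mult.left_commute)
    also have "\<dots> \<le> (\<Sum>i\<in>I. Cf i * (A i * pw \<bar>t - s\<bar> (e i)))"
    proof (rule sum_mono)
      fix i assume "i \<in> I"
      then have "A i * (pw s om * ?S i) \<le> A i * (Cf i * (t - s) powr e i)"
        using A series \<open>s < t\<close> by (intro mult_left_mono) auto
      then show "A i * (pw s om * ?S i) \<le> Cf i * (A i * pw \<bar>t - s\<bar> (e i))"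
        using \<open>s < t\<close> by (simp add: mult.left_commute)
    qed
    also have "\<dots> \<le> (\<Sum>i\<in>I. Cf i) * (\<Sum>i\<in>I. A i * pw \<bar>t - s\<bar> (e i))"
      using \<open>finite I\<close> A Cf by (intro sum_mult_le_sum_mult_sum) (auto simp: pw_nonneg)
    finally show ?thesis .
  qed
  moreover have "(\<lambda>n. pw s om * norm (dyadic_sum J s t n - J t s)) \<longlonglongrightarrow> pw s om * norm (JJ - J t s)"
    by (intro tendsto_intros lim)
  ultimately show ?thesis
    by (intro LIMSEQ_le_const2) auto
qed

theorem lemma2p13:
  fixes l :: nat and \<mu> lam \<nu> \<epsilon> :: "nat \<Rightarrow> real" and \<omega> :: real
  assumes exps: "\<forall>i\<in>{1..l}. 1 < \<mu> i \<and> 0 \<le> lam i \<and> lam i < \<mu> i \<and> 0 \<le> \<nu> i \<and> \<nu> i \<le> \<mu> i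
                     \<and> 0 \<le> \<epsilon> i \<and> \<epsilon> i < 1"
    and om: "0 \<le> \<omega>" "\<exists>i\<in>{1..l}. \<omega> \<le> \<epsilon> i"
    and om2: "\<forall>i\<in>{1..l}. pos_part (\<epsilon> i - \<omega>) < \<mu> i - lam i"
  shows "\<exists>C::real. \<forall>(T::real) (J::real \<Rightarrow> real \<Rightarrow> 'a::banach) (s::real) (t::real) (JJ::'a) (A::nat \<Rightarrow> real).
     0 < T \<and> T \<le> 1
     \<and> continuous_on {(v, u). 0 \<le> u \<and> u \<le> v \<and> v \<le> T} (\<lambda>(v, u). J v u)
     \<and> (\<forall>u. 0 \<le> u \<and> u \<le> T \<longrightarrow> J u u = 0)
     \<and> 0 \<le> s \<and> s \<le> t \<and> t \<le> T
     \<and> (dyadic_sum J s t \<longlonglongrightarrow> JJ)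
     \<and> (\<forall>i\<in>{1..l}. 0 \<le> A i)
     \<and> (\<forall>u m v. s \<le> u \<and> u \<le> m \<and> m \<le> v \<and> v \<le> t \<and> 0 < m \<longrightarrow>
          norm (deltaJ J v m u)
            \<le> (\<Sum>i=1..l. A i * pw \<bar>t - u\<bar> (- lam i) * pw \<bar>u - m\<bar> (\<nu> i)
                           * pw \<bar>m - v\<bar> (\<mu> i - \<nu> i) * pw m (- \<epsilon> i)))
     \<longrightarrow> pw s \<omega> * norm (JJ - J t s)
           \<le> C * (\<Sum>i=1..l. A i * pw \<bar>t - s\<bar> (\<mu> i - lam i - pos_part (\<epsilon> i - \<omega>)))"
proof -
  define e where "e i = \<mu> i - lam i - pos_part (\<epsilon> i - \<omega>)" for i
  have "\<forall>i\<in>{1..l}. \<exists>C\<ge>0. \<forall>s t n. 0 \<le> s \<and> s < t \<and> t \<le> 1 \<longrightarrow>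
          pw s \<omega> * (\<Sum>p<n. dyadic_level_weight (lam i) (\<nu> i) (\<mu> i) (\<epsilon> i) s t p) \<le> C * (t - s) powr e i"
    using exps om(1) om2 unfolding e_def by (intro ballI dyadic_weight_series_le) auto
  then obtain Cf where Cf: "\<forall>i\<in>{1..l}. 0 \<le> Cf i \<and> (\<forall>s t n. 0 \<le> s \<and> s < t \<and> t \<le> 1 \<longrightarrow>
          pw s \<omega> * (\<Sum>p<n. dyadic_level_weight (lam i) (\<nu> i) (\<mu> i) (\<epsilon> i) s t p) \<le> Cf i * (t - s) powr e i)"
    by metis
  show ?thesis
  proof (intro exI[of _ "\<Sum>i=1..l. Cf i"] allI impI, elim conjE)
    fix T s t :: real and J :: "real \<Rightarrow> real \<Rightarrow> 'a" and JJ :: 'a and A :: "nat \<Rightarrow> real"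
    assume "T \<le> 1" "\<forall>u. 0 \<le> u \<and> u \<le> T \<longrightarrow> J u u = 0" "0 \<le> s" "s \<le> t" "t \<le> T"
      "dyadic_sum J s t \<longlonglongrightarrow> JJ" "\<forall>i\<in>{1..l}. 0 \<le> A i"
      "\<forall>u m v. s \<le> u \<and> u \<le> m \<and> m \<le> v \<and> v \<le> t \<and> 0 < m \<longrightarrow>
          norm (deltaJ J v m u) \<le> (\<Sum>i=1..l. A i * pw \<bar>t - u\<bar> (- lam i) * pw \<bar>u - m\<bar> (\<nu> i)
                                          * pw \<bar>m - v\<bar> (\<mu> i - \<nu> i) * pw m (- \<epsilon> i))"
    then show "pw s \<omega> * norm (JJ - J t s)
           \<le> (\<Sum>i=1..l. Cf i) * (\<Sum>i=1..l. A i * pw \<bar>t - s\<bar> (\<mu> i - lam i - pos_part (\<epsilon> i - \<omega>)))"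
      using Cf unfolding e_def[symmetric]
      by (intro dyadic_limit_weighted_le[where lam = lam and nu = \<nu> and mu = \<mu> and eps = \<epsilon>])
         (auto simp: delta_weight_def mult.assoc)
  qed
qed

end
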